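(* Fix $1\le r<\infty$, $d\in\mathbb{N}$ and $\varepsilon>0$. Let $a=\lceil(32/\varepsilon+2)^r\rceil$, $k_j=a^{j-1}$, and $Q=\{k_{2j}\}_{j=1}^\infty$. Then for all $\bar m\in[Q]^d$, all $k\in Q$ with $k>m_d$, and all step preserving maps $F\colon S^+_{\ell_\infty^k}\to S^+_{\ell_r^k}$ with $\omega_F(\tfrac1d)\le\tfrac\varepsilon8$, we have \[\Big\|F(z(\bar m))-\frac1{k^{1/r}}\sum_{i=1}^ke_i\Big\|_r\le\varepsilon,\] where $(e_i)_{i=1}^k$ is the standard basis of $\mathbb{R}^k$.
   Context: $S^+_{\ell_p^k}=\{x\in\mathbb{R}^k:\|x\|_p=1,\ x_i\ge0\ \forall i\}$. $[Q]^d$ is the set of increasing $d$-tuples from $Q$; with $m_0=0$, $z(\bar m)=\sum_{s=1}^d(1-\frac{s-1}{d})1_{(m_{s-1},m_s]}$, where $1_{(a,b]}$ is the indicator vector of $\{i:a<i\le b\}$. $F=(F_i)$ is step preserving if $x_i=x_j$ implies $F_i(x)=F_j(x)$. $\omega_F(t)=\sup\{\|F(x)-F(y)\|_r:\|x-y\|_\infty\le t\}$. *)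

theory Defs
  imports Complex_Main
begin

text \<open>Vectors in R^k are represented as functions nat => real, with coordinates
  indexed by {1..k}; elements of the spheres below vanish outside {1..k}.\<close>

definition lp_norm :: "real \<Rightarrow> nat \<Rightarrow> (nat \<Rightarrow> real) \<Rightarrow> real" where
  "lp_norm p k x = (\<Sum>i\<in>{1..k}. \<bar>x i\<bar> powr p) powr (1 / p)"

definition sup_norm :: "nat \<Rightarrow> (nat \<Rightarrow> real) \<Rightarrow> real" where
  "sup_norm k x = Max ((\<lambda>i. \<bar>x i\<bar>) ` {1..k})"

definition pos_sphere_lp :: "real \<Rightarrow> nat \<Rightarrow> (nat \<Rightarrow> real) set" where
  "pos_sphere_lp p k = {x. lp_norm p k x = 1 \<and> (\<forall>i\<in>{1..k}. x i \<ge> 0) \<and> (\<forall>i. i \<notin> {1..k} \<longrightarrow> x i = 0)}"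

definition pos_sphere_linf :: "nat \<Rightarrow> (nat \<Rightarrow> real) set" where
  "pos_sphere_linf k = {x. sup_norm k x = 1 \<and> (\<forall>i\<in>{1..k}. x i \<ge> 0) \<and> (\<forall>i. i \<notin> {1..k} \<longrightarrow> x i = 0)}"

definition step_preserving :: "nat \<Rightarrow> ((nat \<Rightarrow> real) \<Rightarrow> (nat \<Rightarrow> real)) \<Rightarrow> bool" where
  "step_preserving k F \<longleftrightarrow>
     (\<forall>x\<in>pos_sphere_linf k. \<forall>i\<in>{1..k}. \<forall>j\<in>{1..k}. x i = x j \<longrightarrow> F x i = F x j)"

definition modulus :: "real \<Rightarrow> nat \<Rightarrow> ((nat \<Rightarrow> real) \<Rightarrow> (nat \<Rightarrow> real)) \<Rightarrow> real \<Rightarrow> real" where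
  "modulus r k F t = Sup {lp_norm r k (\<lambda>i. F x i - F y i) | x y.
       x \<in> pos_sphere_linf k \<and> y \<in> pos_sphere_linf k \<and> sup_norm k (\<lambda>i. x i - y i) \<le> t}"

definition incr_tuples :: "nat set \<Rightarrow> nat \<Rightarrow> (nat \<Rightarrow> nat) set" where
  "incr_tuples Q d = {m. (\<forall>s\<in>{1..d}. m s \<in> Q) \<and> (\<forall>s\<in>{1..<d}. m s < m (Suc s))}"

text \<open>z(m) with the convention m_0 = 0.\<close>
definition zvec :: "nat \<Rightarrow> (nat \<Rightarrow> nat) \<Rightarrow> nat \<Rightarrow> real" where
  "zvec d m i = (\<Sum>s\<in>{1..d}. (1 - real (s - 1) / real d) *
      (if (if s = 1 then 0 else m (s - 1)) < i \<and> i \<le> m s then 1 else 0))"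

end

(*
  Write u = F(z(m)) and split {1..k} into the blocks (m_(l-1), m_l], with m_0 = 0 and
  m_(d+1) = k; z(m) is constant on each block, and each block end is at least a^2 times the
  previous one.  Joining the blocks in consecutive pairs (in either of the two ways) moves z(m)
  by at most 1/d in the sup norm, hence moves u by at most eps/8.  By step preservation the
  image of the joined vector is constant on each pair, and the first block of a pair is at most
  a fraction 1/a of the second, so the first blocks carry norm at most a^(-1/r).  Using both
  pairings, u has norm at most 2 (a^(-1/r) + eps/8) on the head {1..m_d}.  On the tail
  (m_d, k] the vector z(m) vanishes, so u is constant there, and a unit vector that is small on
  the head and flat on a tail containing all but a fraction 1/a of the coordinates is close to
  the flat unit vector.
*)
theory Submission
  imports Defs "HOL-Analysis.Convex"
begin

definition lp_norm_on :: "real \<Rightarrow> 'a set \<Rightarrow> ('a \<Rightarrow> real) \<Rightarrow> real" where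
  "lp_norm_on p S x = (\<Sum>i\<in>S. \<bar>x i\<bar> powr p) powr (1 / p)"

lemma lp_norm_eq_lp_norm_on: "lp_norm p k x = lp_norm_on p {1..k} x"
  unfolding lp_norm_def lp_norm_on_def ..

lemma lp_norm_on_nonneg [simp]: "0 \<le> lp_norm_on p S x"
  by (simp add: lp_norm_on_def)

lemma lp_norm_on_powr:
  assumes "p > 0"
  shows "lp_norm_on p S x powr p = (\<Sum>i\<in>S. \<bar>x i\<bar> powr p)"
  using assms by (simp add: lp_norm_on_def powr_powr sum_nonneg)

lemma lp_norm_on_cong:
  "(\<And>i. i \<in> S \<Longrightarrow> x i = y i) \<Longrightarrow> lp_norm_on p S x = lp_norm_on p S y"
  unfolding lp_norm_on_def by (metis (no_types, lifting) sum.cong)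

lemma lp_norm_on_uminus [simp]: "lp_norm_on p S (\<lambda>i. - x i) = lp_norm_on p S x"
  by (simp add: lp_norm_on_def)

lemma lp_norm_on_scale:
  assumes "p > 0"
  shows "lp_norm_on p S (\<lambda>i. c * x i) = \<bar>c\<bar> * lp_norm_on p S x"
proof -
  have "(\<Sum>i\<in>S. \<bar>c * x i\<bar> powr p) = \<bar>c\<bar> powr p * (\<Sum>i\<in>S. \<bar>x i\<bar> powr p)"
    by (simp add: abs_mult powr_mult sum_distrib_left)
  then show ?thesis
    using assms by (simp add: lp_norm_on_def powr_mult powr_powr sum_nonneg)
qed

lemma lp_norm_on_const:
  assumes "p > 0"
  shows "lp_norm_on p S (\<lambda>_. c) = real (card S) powr (1 / p) * \<bar>c\<bar>"
  using assms by (simp add: lp_norm_on_def powr_mult powr_powr)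

lemma lp_norm_on_le_iff:
  assumes "p > 0" "c \<ge> 0"
  shows "lp_norm_on p S x \<le> c \<longleftrightarrow> (\<Sum>i\<in>S. \<bar>x i\<bar> powr p) \<le> c powr p"
proof
  assume "lp_norm_on p S x \<le> c"
  then show "(\<Sum>i\<in>S. \<bar>x i\<bar> powr p) \<le> c powr p"
    using assms powr_mono2[of p "lp_norm_on p S x" c] by (simp add: lp_norm_on_powr)
next
  assume "(\<Sum>i\<in>S. \<bar>x i\<bar> powr p) \<le> c powr p"
  then have "lp_norm_on p S x \<le> (c powr p) powr (1 / p)"
    unfolding lp_norm_on_def using assms by (intro powr_mono2) (auto intro: sum_nonneg)
  then show "lp_norm_on p S x \<le> c"
    using assms by (simp add: powr_powr)
qed

lemma lp_norm_on_eq_1_iff: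
  assumes "p > 0"
  shows "lp_norm_on p S x = 1 \<longleftrightarrow> (\<Sum>i\<in>S. \<bar>x i\<bar> powr p) = 1"
  using lp_norm_on_powr[OF assms, of S x] by (auto simp: lp_norm_on_def)

lemma lp_norm_on_eq_0_iff:
  assumes "finite S" "p > 0"
  shows "lp_norm_on p S x = 0 \<longleftrightarrow> (\<forall>i\<in>S. x i = 0)"
  using assms by (simp add: lp_norm_on_def sum_nonneg_eq_0_iff)

lemma lp_norm_on_mono:
  assumes "finite T" "S \<subseteq> T" "p > 0"
  shows "lp_norm_on p S x \<le> lp_norm_on p T x"
  unfolding lp_norm_on_def using assms by (intro powr_mono2 sum_mono2) (auto intro: sum_nonneg)

text \<open>\<open>powr_convex\<close> only covers \<open>{0<..}\<close>; if \<open>s\<close> or \<open>t\<close> vanishes the claim reduces to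
  \<open>(c * x) powr p \<le> c * x powr p\<close> for \<open>0 \<le> c \<le> 1\<close>.\<close>
lemma convex_powr_nonneg:
  fixes s t l p :: real
  assumes "0 \<le> s" "0 \<le> t" "0 \<le> l" "l \<le> 1" "p \<ge> 1"
  shows "(l * s + (1 - l) * t) powr p \<le> l * s powr p + (1 - l) * t powr p"
proof -
  have scale: "(c * x) powr p \<le> c * x powr p" if "0 \<le> c" "c \<le> 1" "0 \<le> x" for c x :: real
    using that assms powr_mono'[of 1 p c] mult_right_mono[of "c powr p" c "x powr p"]
    by (simp add: powr_mult)
  consider "s > 0" "t > 0" | "s = 0" | "t = 0"
    using assms by linarith
  then show ?thesis
  proof cases
    case 1
    show ?thesis
      using convex_onD[OF powr_convex[OF assms(5)], of "1 - l" s t] 1 assms by simp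
  qed (use scale assms in auto)
qed

lemma lp_norm_on_convex_combination_le_1:
  assumes "p \<ge> 1" "0 \<le> l" "l \<le> 1" "lp_norm_on p S x \<le> 1" "lp_norm_on p S y \<le> 1"
  shows "lp_norm_on p S (\<lambda>i. l * x i + (1 - l) * y i) \<le> 1"
proof -
  have p: "p > 0" using assms by simp
  have "(\<Sum>i\<in>S. \<bar>l * x i + (1 - l) * y i\<bar> powr p) \<le> (\<Sum>i\<in>S. (l * \<bar>x i\<bar> + (1 - l) * \<bar>y i\<bar>) powr p)"
  proof (rule sum_mono)
    fix i
    have "\<bar>l * x i + (1 - l) * y i\<bar> \<le> l * \<bar>x i\<bar> + (1 - l) * \<bar>y i\<bar>"
      using assms abs_triangle_ineq[of "l * x i" "(1 - l) * y i"] by (simp add: abs_mult)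
    then show "\<bar>l * x i + (1 - l) * y i\<bar> powr p \<le> (l * \<bar>x i\<bar> + (1 - l) * \<bar>y i\<bar>) powr p"
      using p by (intro powr_mono2) auto
  qed
  also have "\<dots> \<le> (\<Sum>i\<in>S. l * \<bar>x i\<bar> powr p + (1 - l) * \<bar>y i\<bar> powr p)"
    using assms by (intro sum_mono convex_powr_nonneg) auto
  also have "\<dots> = l * (\<Sum>i\<in>S. \<bar>x i\<bar> powr p) + (1 - l) * (\<Sum>i\<in>S. \<bar>y i\<bar> powr p)"
    by (simp add: sum.distrib sum_distrib_left)
  also have "\<dots> \<le> l * 1 + (1 - l) * 1"
    using assms p by (intro add_mono mult_left_mono) (auto simp: lp_norm_on_le_iff)
  finally show ?thesis
    using p by (simp add: lp_norm_on_le_iff)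
qed

lemma lp_norm_on_triangle:
  assumes "finite S" "p \<ge> 1"
  shows "lp_norm_on p S (\<lambda>i. x i + y i) \<le> lp_norm_on p S x + lp_norm_on p S y"
proof -
  define A B where "A = lp_norm_on p S x" and "B = lp_norm_on p S y"
  have p: "p > 0" using assms by simp
  consider "A = 0" | "B = 0" | "A > 0" "B > 0"
    unfolding A_def B_def by (metis lp_norm_on_nonneg order_le_less)
  then show ?thesis
  proof cases
    case 1
    then have "\<forall>i\<in>S. x i = 0"
      using lp_norm_on_eq_0_iff[OF assms(1) p] unfolding A_def by simp
    then have "lp_norm_on p S (\<lambda>i. x i + y i) = lp_norm_on p S y"
      by (intro lp_norm_on_cong) simp
    then show ?thesis
      using 1 unfolding A_def B_def by simp
  next
    case 2
    then have "\<forall>i\<in>S. y i = 0"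
      using lp_norm_on_eq_0_iff[OF assms(1) p] unfolding B_def by simp
    then have "lp_norm_on p S (\<lambda>i. x i + y i) = lp_norm_on p S x"
      by (intro lp_norm_on_cong) simp
    then show ?thesis
      using 2 unfolding A_def B_def by simp
  next
    case 3
    define l where "l = A / (A + B)"
    have weights: "(A + B) * l = A" "(A + B) * (1 - l) = B"
      using 3 unfolding l_def by (auto simp: field_simps)
    have decomp: "x i + y i = (A + B) * (l * (x i / A) + (1 - l) * (y i / B))" for i
    proof -
      have "(A + B) * (l * (x i / A) + (1 - l) * (y i / B))
          = ((A + B) * l) * (x i / A) + ((A + B) * (1 - l)) * (y i / B)"
        by (simp only: distrib_left mult.assoc)
      then show ?thesis
        using weights 3 by simp
    qed
    have "lp_norm_on p S (\<lambda>i. x i + y i)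
        = lp_norm_on p S (\<lambda>i. (A + B) * (l * (x i / A) + (1 - l) * (y i / B)))"
      by (simp only: decomp)
    also have "\<dots> = (A + B) * lp_norm_on p S (\<lambda>i. l * (x i / A) + (1 - l) * (y i / B))"
      unfolding lp_norm_on_scale[OF p] using 3 by simp
    also have "lp_norm_on p S (\<lambda>i. l * (x i / A) + (1 - l) * (y i / B)) \<le> 1"
    proof (rule lp_norm_on_convex_combination_le_1)
      show "lp_norm_on p S (\<lambda>i. x i / A) \<le> 1" "lp_norm_on p S (\<lambda>i. y i / B) \<le> 1"
        using lp_norm_on_scale[OF p, of S "1 / A" x] lp_norm_on_scale[OF p, of S "1 / B" y] 3
        unfolding A_def B_def by auto
    qed (use assms 3 in \<open>auto simp: l_def\<close>)
    finally show ?thesis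
      using 3 unfolding A_def B_def by simp
  qed
qed

lemma lp_norm_on_diff_le:
  assumes "finite S" "p \<ge> 1"
  shows "lp_norm_on p S (\<lambda>i. x i - y i) \<le> lp_norm_on p S x + lp_norm_on p S y"
  using lp_norm_on_triangle[OF assms, of x "\<lambda>i. - y i"]
  by (simp only: diff_conv_add_uminus lp_norm_on_uminus)

lemma lp_norm_on_Un_le:
  assumes "finite A" "finite B" "p \<ge> 1"
  shows "lp_norm_on p (A \<union> B) x \<le> lp_norm_on p A x + lp_norm_on p B x"
proof -
  let ?xA = "\<lambda>i. if i \<in> A then x i else 0" and ?xB = "\<lambda>i. if i \<in> B - A then x i else 0"
  have restrict: "lp_norm_on p (A \<union> B) (\<lambda>i. if i \<in> C then x i else 0) = lp_norm_on p C x"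
    if "C \<subseteq> A \<union> B" for C
  proof -
    have "(\<Sum>i\<in>A \<union> B. \<bar>if i \<in> C then x i else 0\<bar> powr p)
        = (\<Sum>i\<in>A \<union> B. if i \<in> C then \<bar>x i\<bar> powr p else 0)"
      by (intro sum.cong) auto
    also have "\<dots> = (\<Sum>i\<in>C. \<bar>x i\<bar> powr p)"
      using that assms by (simp add: sum.inter_restrict [symmetric] Int_absorb1)
    finally show ?thesis unfolding lp_norm_on_def by simp
  qed
  have "lp_norm_on p (A \<union> B) x = lp_norm_on p (A \<union> B) (\<lambda>i. ?xA i + ?xB i)"
    by (rule lp_norm_on_cong) auto
  also have "\<dots> \<le> lp_norm_on p (A \<union> B) ?xA + lp_norm_on p (A \<union> B) ?xB"
    using assms by (intro lp_norm_on_triangle) auto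
  also have "\<dots> = lp_norm_on p A x + lp_norm_on p (B - A) x"
    using restrict[of A] restrict[of "B - A"] by auto
  also have "lp_norm_on p (B - A) x \<le> lp_norm_on p B x"
    using assms by (intro lp_norm_on_mono) auto
  finally show ?thesis by simp
qed

lemma lp_norm_on_Un_disjoint_powr:
  assumes "finite A" "finite B" "A \<inter> B = {}" "p > 0"
  shows "lp_norm_on p (A \<union> B) x powr p = lp_norm_on p A x powr p + lp_norm_on p B x powr p"
  using assms by (simp add: lp_norm_on_powr sum.union_disjoint)

lemma lp_norm_on_const_diff:
  assumes "p > 0" "0 \<le> c" "0 \<le> e"
  shows "lp_norm_on p S (\<lambda>_. c - e) = \<bar>lp_norm_on p S (\<lambda>_. c) - lp_norm_on p S (\<lambda>_. e)\<bar>"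
  using assms by (simp add: lp_norm_on_const abs_mult flip: right_diff_distrib)

lemma lp_norm_on_flat:
  assumes "p > 0"
  shows "lp_norm_on p S (\<lambda>_. 1 / real k powr (1 / p)) = (real (card S) / real k) powr (1 / p)"
  using assms by (simp add: lp_norm_on_const powr_divide)

lemma self_le_powr_inverse:
  fixes x p :: real
  assumes "0 \<le> x" "x \<le> 1" "1 \<le> p"
  shows "x \<le> x powr (1 / p)"
  using powr_mono'[of "1 / p" 1 x] assms by simp

lemma abs_powr_inverse_diff_le:
  fixes p s t :: real
  assumes "1 \<le> p" "0 \<le> s" "s \<le> 1" "0 \<le> t" "t \<le> 1"
  shows "\<bar>(1 - s powr p) powr (1 / p) - (1 - t) powr (1 / p)\<bar> \<le> s + t"
proof -
  have "s powr p \<le> s"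
    using powr_mono'[of 1 p s] assms by simp
  then have "1 - s \<le> (1 - s powr p) powr (1 / p)" "(1 - s powr p) powr (1 / p) \<le> 1"
    using self_le_powr_inverse[of "1 - s powr p" p] powr_le1[of "1 / p" "1 - s powr p"] assms
    by auto
  moreover have "1 - t \<le> (1 - t) powr (1 / p)" "(1 - t) powr (1 / p) \<le> 1"
    using self_le_powr_inverse[of "1 - t" p] powr_le1[of "1 / p" "1 - t"] assms by auto
  ultimately show ?thesis
    using assms by linarith
qed

text \<open>A unit vector that is flat on the tail \<open>{n<..k}\<close> has tail norm \<open>(1 - \<eta> powr p) powr (1/p)\<close>,
  where \<open>\<eta>\<close> is its norm on the head \<open>{1..n}\<close>, while the flat unit vector has tail norm
  \<open>(1 - n/k) powr (1/p)\<close>; both are close to 1 when \<open>\<eta>\<close> and \<open>n/k\<close> are small.\<close>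
lemma lp_norm_on_flat_tail_diff_le:
  fixes u :: "nat \<Rightarrow> real"
  assumes p: "p \<ge> 1" and "n \<le> k" "0 < k" "0 \<le> u k" and unit: "lp_norm_on p {1..k} u = 1"
    and flat: "\<And>i. i \<in> {n<..k} \<Longrightarrow> u i = u k"
  shows "lp_norm_on p {n<..k} (\<lambda>i. u i - 1 / real k powr (1 / p)) \<le> lp_norm_on p {1..n} u + n / k"
proof -
  define f \<eta> where "f = 1 / real k powr (1 / p)" and "\<eta> = lp_norm_on p {1..n} u"
  have p0: "p > 0" using p by simp
  have split: "{1..k} = {1..n} \<union> {n<..k}" "{1..n} \<inter> {n<..k} = {}"
    using \<open>n \<le> k\<close> by auto
  have "lp_norm_on p ({1..n} \<union> {n<..k}) u = 1"
    using unit unfolding split(1) .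
  then have "\<eta> powr p + lp_norm_on p {n<..k} u powr p = 1"
    using lp_norm_on_Un_disjoint_powr[of "{1..n}" "{n<..k}" p u] split(2) p0
    unfolding \<eta>_def by simp
  then have "lp_norm_on p {n<..k} u powr p = 1 - \<eta> powr p"
    by linarith
  then have "(lp_norm_on p {n<..k} u powr p) powr (1 / p) = (1 - \<eta> powr p) powr (1 / p)"
    by (rule arg_cong)
  then have "lp_norm_on p {n<..k} u = (1 - \<eta> powr p) powr (1 / p)"
    using p0 by (simp add: powr_powr)
  moreover have "lp_norm_on p {n<..k} (\<lambda>_. f) = (1 - n / k) powr (1 / p)"
    unfolding f_def lp_norm_on_flat[OF p0] using \<open>n \<le> k\<close> \<open>0 < k\<close>
    by (simp add: of_nat_diff diff_divide_distrib)
  moreover have "lp_norm_on p {n<..k} (\<lambda>i. u i - f)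
      = \<bar>lp_norm_on p {n<..k} u - lp_norm_on p {n<..k} (\<lambda>_. f)\<bar>"
  proof -
    have "lp_norm_on p {n<..k} u = lp_norm_on p {n<..k} (\<lambda>_. u k)"
      by (rule lp_norm_on_cong) (rule flat)
    moreover have "lp_norm_on p {n<..k} (\<lambda>i. u i - f) = lp_norm_on p {n<..k} (\<lambda>_. u k - f)"
      by (rule lp_norm_on_cong) (simp only: flat)
    ultimately show ?thesis
      using \<open>0 \<le> u k\<close> p0 by (simp add: lp_norm_on_const_diff f_def)
  qed
  moreover have "\<eta> \<le> 1"
    using lp_norm_on_mono[of "{1..k}" "{1..n}" p u] unit p0 \<open>n \<le> k\<close> unfolding \<eta>_def by simp
  moreover have "n / k \<le> 1"
    using \<open>n \<le> k\<close> \<open>0 < k\<close> by simp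
  ultimately show ?thesis
    using abs_powr_inverse_diff_le[of p \<eta> "n / k"] p unfolding \<eta>_def f_def by simp
qed

lemma lp_norm_on_diff_flat_le:
  fixes u :: "nat \<Rightarrow> real"
  assumes p: "p \<ge> 1" and "n \<le> k" "0 < k"
    and nonneg: "\<And>i. i \<in> {1..k} \<Longrightarrow> 0 \<le> u i" and unit: "lp_norm_on p {1..k} u = 1"
    and flat: "\<And>i. i \<in> {n<..k} \<Longrightarrow> u i = u k"
  shows "lp_norm_on p {1..k} (\<lambda>i. u i - 1 / real k powr (1 / p))
    \<le> 2 * (lp_norm_on p {1..n} u + (n / k) powr (1 / p))"
proof -
  define f \<eta> where "f = 1 / real k powr (1 / p)" and "\<eta> = lp_norm_on p {1..n} u"
  have p0: "p > 0" using p by simp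
  have "lp_norm_on p {1..n} (\<lambda>i. u i - f) \<le> \<eta> + lp_norm_on p {1..n} (\<lambda>_. f)"
    unfolding \<eta>_def using p by (intro lp_norm_on_diff_le) auto
  then have head: "lp_norm_on p {1..n} (\<lambda>i. u i - f) \<le> \<eta> + (n / k) powr (1 / p)"
    unfolding f_def lp_norm_on_flat[OF p0] by simp
  have "lp_norm_on p {n<..k} (\<lambda>i. u i - f) \<le> \<eta> + n / k"
    using lp_norm_on_flat_tail_diff_le[OF p \<open>n \<le> k\<close> \<open>0 < k\<close> _ unit flat] nonneg[of k] \<open>0 < k\<close>
    unfolding f_def \<eta>_def by simp
  also have "\<dots> \<le> \<eta> + (n / k) powr (1 / p)"
    using self_le_powr_inverse[of "n / k" p] \<open>n \<le> k\<close> \<open>0 < k\<close> p by simp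
  finally have tail: "lp_norm_on p {n<..k} (\<lambda>i. u i - f) \<le> \<eta> + (n / k) powr (1 / p)" .
  have split: "{1..k} = {1..n} \<union> {n<..k}"
    using \<open>n \<le> k\<close> by auto
  have "lp_norm_on p {1..k} (\<lambda>i. u i - f)
      \<le> lp_norm_on p {1..n} (\<lambda>i. u i - f) + lp_norm_on p {n<..k} (\<lambda>i. u i - f)"
    unfolding split using p by (intro lp_norm_on_Un_le) auto
  then show ?thesis
    using head tail unfolding f_def \<eta>_def by simp
qed

lemma lp_norm_diff_le_modulus:
  assumes "p \<ge> 1" and F: "F ` pos_sphere_linf k \<subseteq> pos_sphere_lp p k"
    and "x \<in> pos_sphere_linf k" "y \<in> pos_sphere_linf k" "sup_norm k (\<lambda>i. x i - y i) \<le> t"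
  shows "lp_norm p k (\<lambda>i. F x i - F y i) \<le> modulus p k F t"
  unfolding modulus_def
proof (rule cSup_upper)
  show "lp_norm p k (\<lambda>i. F x i - F y i) \<in> {lp_norm p k (\<lambda>i. F x i - F y i) | x y.
      x \<in> pos_sphere_linf k \<and> y \<in> pos_sphere_linf k \<and> sup_norm k (\<lambda>i. x i - y i) \<le> t}"
    using assms by blast
  have "lp_norm p k (\<lambda>i. F x i - F y i) \<le> 2" if "x \<in> pos_sphere_linf k" "y \<in> pos_sphere_linf k" for x y
  proof -
    have "lp_norm_on p {1..k} (F x) = 1" "lp_norm_on p {1..k} (F y) = 1"
      using F that by (auto simp: pos_sphere_lp_def lp_norm_eq_lp_norm_on)
    moreover have "lp_norm_on p {1..k} (\<lambda>i. F x i - F y i)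
        \<le> lp_norm_on p {1..k} (F x) + lp_norm_on p {1..k} (F y)"
      using assms by (intro lp_norm_on_diff_le) auto
    ultimately show ?thesis by (simp add: lp_norm_eq_lp_norm_on)
  qed
  then show "bdd_above {lp_norm p k (\<lambda>i. F x i - F y i) | x y.
      x \<in> pos_sphere_linf k \<and> y \<in> pos_sphere_linf k \<and> sup_norm k (\<lambda>i. x i - y i) \<le> t}"
    by (intro bdd_aboveI[of _ 2]) blast
qed

lemma sum_le_sum_of_copies:
  fixes g :: "'a \<Rightarrow> real"
  assumes "finite T" "inj_on \<Phi> (S \<times> C)" "\<Phi> ` (S \<times> C) \<subseteq> T"
    and copy: "\<And>i j. i \<in> S \<Longrightarrow> j \<in> C \<Longrightarrow> g (\<Phi> (i, j)) = g i"
    and nonneg: "\<And>x. x \<in> T \<Longrightarrow> 0 \<le> g x"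
  shows "real (card C) * sum g S \<le> sum g T"
proof -
  have "real (card C) * sum g S = (\<Sum>(i, j)\<in>S \<times> C. g i)"
    by (simp add: sum_distrib_right sum.cartesian_product [symmetric] mult.commute)
  also have "\<dots> = (\<Sum>ij\<in>S \<times> C. g (\<Phi> ij))"
    by (intro sum.cong) (auto simp: copy)
  also have "\<dots> = sum g (\<Phi> ` (S \<times> C))"
    using sum.reindex[OF assms(2), of g] by simp
  also have "\<dots> \<le> sum g T"
    using assms by (intro sum_mono2) auto
  finally show ?thesis .
qed

lemma add_mult_eq_add_mult_cancel:
  fixes i i' j j' M :: nat
  assumes "i + j * M = i' + j' * M" "0 < i" "i \<le> M" "0 < i'" "i' \<le> M"
  shows "i = i' \<and> j = j'"
proof -
  have quotient: "(r + j * M) div M = j" if "r < M" for r j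
    using that by simp
  have "(i - 1) + j * M = (i' - 1) + j' * M"
    using assms by simp
  then have "j = j'"
    using quotient[of "i - 1" j] quotient[of "i' - 1" j'] assms by simp
  then show ?thesis
    using assms(1) by simp
qed

text \<open>Lowering the levels \<open>l > 0\<close> with \<open>l mod 2 = par\<close> merges each such block into its predecessor.\<close>
definition merge_level :: "nat \<Rightarrow> nat \<Rightarrow> nat" where
  "merge_level par l = (if 0 < l \<and> l mod 2 = par then l - 1 else l)"

locale lacunary_tuple =
  fixes a d k :: nat and m :: "nat \<Rightarrow> nat"
  assumes a_ge_2: "2 \<le> a" and d_pos: "1 \<le> d" and m_1_pos: "1 \<le> m 1"
    and gap: "\<And>l. 1 \<le> l \<Longrightarrow> l < d \<Longrightarrow> a\<^sup>2 * m l \<le> m (Suc l)"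
    and gap_last: "a\<^sup>2 * m d \<le> k"
begin

text \<open>\<open>boundary l\<close> is \<open>m\<^sub>l\<close> with \<open>m\<^sub>0 = 0\<close> and \<open>m\<^sub>d\<^sub>+\<^sub>1 = k\<close>; \<open>level i = l\<close> means
  \<open>i \<in> {boundary l<..boundary (Suc l)}\<close>, where \<open>z(m)\<close> takes the value \<open>(d - l) / d\<close>.\<close>
definition boundary :: "nat \<Rightarrow> nat" where
  "boundary l = (if l = 0 then 0 else if l \<le> d then m l else k)"

lemma boundary_gap: "1 \<le> l \<Longrightarrow> l \<le> d \<Longrightarrow> a\<^sup>2 * boundary l \<le> boundary (Suc l)"
  using gap gap_last by (cases "l = d") (auto simp: boundary_def)

lemma boundary_pos: "1 \<le> l \<Longrightarrow> l \<le> Suc d \<Longrightarrow> 1 \<le> boundary l"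
proof (induction l)
  case (Suc l)
  show ?case
  proof (cases "l = 0")
    case True
    then show ?thesis using m_1_pos d_pos by (simp add: boundary_def)
  next
    case False
    have "1 \<le> boundary l"
      using Suc False by simp
    also have "\<dots> \<le> a\<^sup>2 * boundary l"
      using a_ge_2 by simp
    also have "\<dots> \<le> boundary (Suc l)"
      using Suc.prems False by (intro boundary_gap) auto
    finally show ?thesis .
  qed
qed simp

lemma boundary_less_Suc:
  assumes "l \<le> d"
  shows "boundary l < boundary (Suc l)"
proof (cases "l = 0")
  case True
  then show ?thesis using boundary_pos[of 1] by (simp add: boundary_def)
next
  case False
  have "1 \<le> boundary l" using False assms boundary_pos by simp
  moreover have "4 \<le> a\<^sup>2" using a_ge_2 power_mono[of 2 a 2] by simp
  ultimately have "boundary l < a\<^sup>2 * boundary l" by simp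
  also have "\<dots> \<le> boundary (Suc l)" using False assms by (intro boundary_gap) auto
  finally show ?thesis .
qed

lemma boundary_strict_mono: "l < l' \<Longrightarrow> l' \<le> Suc d \<Longrightarrow> boundary l < boundary l'"
proof (induction l')
  case (Suc l')
  have "boundary l' < boundary (Suc l')"
    using Suc.prems by (intro boundary_less_Suc) simp
  moreover have "l = l' \<or> boundary l < boundary l'"
    using Suc by (cases "l = l'") auto
  ultimately show ?case by auto
qed simp

lemma boundary_mono: "l \<le> l' \<Longrightarrow> l' \<le> Suc d \<Longrightarrow> boundary l \<le> boundary l'"
  using boundary_strict_mono by (cases "l = l'") (auto intro: less_imp_le)

lemma boundary_le_k: "boundary l \<le> k"
  using boundary_mono[of l "Suc d"] by (cases "l \<le> Suc d") (auto simp: boundary_def)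

definition level :: "nat \<Rightarrow> nat" where
  "level i = (LEAST l. i \<le> boundary (Suc l))"

lemma level_eqI:
  assumes "l \<le> d" "boundary l < i" "i \<le> boundary (Suc l)"
  shows "level i = l"
proof -
  have "level i \<le> l" unfolding level_def using assms(3) by (rule Least_le)
  moreover have "\<not> level i < l"
  proof
    assume "level i < l"
    then have "boundary (Suc (level i)) \<le> boundary l"
      using assms(1) by (intro boundary_mono) auto
    moreover have "i \<le> boundary (Suc (level i))"
      unfolding level_def using assms(3) by (rule LeastI)
    ultimately show False using assms(2) by simp
  qed
  ultimately show ?thesis by simp
qed

lemma level_bounds:
  assumes "i \<in> {1..k}"
  shows "level i \<le> d" "boundary (level i) < i" "i \<le> boundary (Suc (level i))"
proof -
  have k: "i \<le> boundary (Suc d)" using assms by (simp add: boundary_def)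
  show "level i \<le> d" unfolding level_def using k by (rule Least_le)
  show "i \<le> boundary (Suc (level i))" unfolding level_def using k by (rule LeastI)
  show "boundary (level i) < i"
  proof (cases "level i")
    case 0
    then show ?thesis using assms by (simp add: boundary_def)
  next
    case (Suc l)
    then have "\<not> i \<le> boundary (Suc l)"
      using not_less_Least[of l "\<lambda>l. i \<le> boundary (Suc l)"] unfolding level_def by simp
    then show ?thesis using Suc by simp
  qed
qed

lemma k_pos: "1 \<le> k"
  using boundary_pos[of "Suc d"] by (simp add: boundary_def)

lemma m_d_less_k: "m d < k"
  using boundary_less_Suc[of d] d_pos by (simp add: boundary_def)

lemma level_one: "level 1 = 0"
  using boundary_pos[of 1] d_pos by (intro level_eqI) (auto simp: boundary_def)

lemma level_tail: "i \<in> {m d<..k} \<Longrightarrow> level i = d"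
  using d_pos by (intro level_eqI) (auto simp: boundary_def)

lemma level_head:
  assumes "i \<in> {1..m d}"
  shows "level i < d"
proof -
  have i: "i \<in> {1..k}" using assms m_d_less_k by auto
  have "boundary d = m d" using d_pos by (simp add: boundary_def)
  then have "level i \<noteq> d" using level_bounds(2)[OF i] assms by auto
  then show ?thesis using level_bounds(1)[OF i] by simp
qed

definition level_vector :: "(nat \<Rightarrow> nat) \<Rightarrow> nat \<Rightarrow> real" where
  "level_vector h i = (if i \<in> {1..k} then real (d - h (level i)) / real d else 0)"

lemma in_block_iff:
  assumes "s \<in> {1..d}"
  shows "boundary (s - 1) < i \<and> i \<le> boundary s \<longleftrightarrow> i \<in> {1..k} \<and> s = Suc (level i)"
proof
  assume i: "boundary (s - 1) < i \<and> i \<le> boundary s"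
  then have "i \<in> {1..k}"
    using boundary_le_k[of s] by auto
  moreover have "level i = s - 1"
    using i assms by (intro level_eqI) auto
  ultimately show "i \<in> {1..k} \<and> s = Suc (level i)"
    using assms by simp
next
  assume "i \<in> {1..k} \<and> s = Suc (level i)"
  then show "boundary (s - 1) < i \<and> i \<le> boundary s"
    using level_bounds[of i] by simp
qed

lemma zvec_eq_level_vector: "zvec d m = level_vector id"
proof
  fix i
  have "zvec d m i = (\<Sum>s\<in>{1..d}. if i \<in> {1..k} \<and> s = Suc (level i) then 1 - real (s - 1) / real d else 0)"
    unfolding zvec_def
  proof (intro sum.cong refl)
    fix s
    assume s: "s \<in> {1..d}"
    then have "(if s = 1 then 0 else m (s - 1)) = boundary (s - 1)" "m s = boundary s"
      by (auto simp: boundary_def)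
    then show "(1 - real (s - 1) / real d) * (if (if s = 1 then 0 else m (s - 1)) < i \<and> i \<le> m s then 1 else 0)
        = (if i \<in> {1..k} \<and> s = Suc (level i) then 1 - real (s - 1) / real d else 0)"
      unfolding in_block_iff[OF s, symmetric] by simp
  qed
  also have "\<dots> = level_vector id i"
    using level_bounds[of i] d_pos by (auto simp: level_vector_def field_simps of_nat_diff)
  finally show "zvec d m i = level_vector id i" .
qed

lemma level_vector_mem_sphere:
  assumes "h 0 = 0"
  shows "level_vector h \<in> pos_sphere_linf k"
proof -
  have bounded: "\<bar>level_vector h i\<bar> \<le> 1" for i
    using d_pos by (simp add: level_vector_def divide_le_eq)
  have "Max ((\<lambda>i. \<bar>level_vector h i\<bar>) ` {1..k}) = 1"
  proof (rule Max_eqI)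
    show "1 \<in> (\<lambda>i. \<bar>level_vector h i\<bar>) ` {1..k}"
      using k_pos d_pos assms level_one by (force simp: level_vector_def)
  qed (use bounded in auto)
  then show ?thesis
    unfolding pos_sphere_linf_def sup_norm_def by (auto simp: level_vector_def)
qed

lemma sup_norm_level_vector_merge_le:
  "sup_norm k (\<lambda>i. level_vector id i - level_vector (merge_level par) i) \<le> 1 / real d"
  unfolding sup_norm_def
proof (subst Max_le_iff, safe)
  fix i
  assume i: "i \<in> {1..k}"
  have "\<bar>real (d - level i) - real (d - merge_level par (level i))\<bar> \<le> 1"
    using level_bounds(1)[OF i] by (auto simp: merge_level_def of_nat_diff)
  then have "\<bar>real (d - level i) - real (d - merge_level par (level i))\<bar> / real d \<le> 1 / real d"
    by (simp add: divide_right_mono)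
  then show "\<bar>level_vector id i - level_vector (merge_level par) i\<bar> \<le> 1 / real d"
    using i by (simp add: level_vector_def flip: diff_divide_distrib)
qed (use k_pos in auto)

definition next_block_copy :: "nat \<Rightarrow> nat \<Rightarrow> nat" where
  "next_block_copy i j = i + j * boundary (Suc (level i))"

lemma next_block_copy_in_next_block:
  assumes "i \<in> {1..m d}" "j \<in> {1..a}"
  shows "next_block_copy i j \<in> {1..k}" "level (next_block_copy i j) = Suc (level i)"
proof -
  define l M where "l = level i" and "M = boundary (Suc l)"
  have i: "i \<in> {1..k}" using assms(1) m_d_less_k by auto
  have "l < d" unfolding l_def using assms(1) by (rule level_head)
  have "i \<le> M" unfolding M_def l_def using i by (rule level_bounds)
  have "1 \<le> M" unfolding M_def using \<open>l < d\<close> by (intro boundary_pos) auto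
  have copy: "next_block_copy i j = i + j * M" unfolding next_block_copy_def M_def l_def ..
  have "M \<le> j * M" "1 \<le> i" using assms by auto
  then have lower: "M < next_block_copy i j"
    unfolding copy by linarith
  have "next_block_copy i j \<le> M + a * M"
    unfolding copy using \<open>i \<le> M\<close> assms(2) by (intro add_mono mult_right_mono) auto
  also have "\<dots> \<le> a\<^sup>2 * M"
  proof -
    have "2 * a \<le> a * a" using a_ge_2 by (intro mult_right_mono) auto
    then have "a + 1 \<le> a\<^sup>2" unfolding power2_eq_square using a_ge_2 by linarith
    then show ?thesis using mult_right_mono[of "a + 1" "a\<^sup>2" M] by simp
  qed
  also have "\<dots> \<le> boundary (Suc (Suc l))"
    unfolding M_def using \<open>l < d\<close> by (intro boundary_gap) auto
  finally have upper: "next_block_copy i j \<le> boundary (Suc (Suc l))" .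
  show "level (next_block_copy i j) = Suc (level i)"
    using lower upper \<open>l < d\<close> unfolding l_def M_def by (intro level_eqI) auto
  show "next_block_copy i j \<in> {1..k}"
    using lower upper boundary_le_k[of "Suc (Suc l)"] \<open>1 \<le> M\<close> by auto
qed

lemma inj_on_next_block_copy: "inj_on (\<lambda>(i, j). next_block_copy i j) ({1..m d} \<times> {1..a})"
proof (rule inj_onI, clarify)
  fix i j i' j'
  assume i: "i \<in> {1..m d}" "j \<in> {1..a}" and i': "i' \<in> {1..m d}" "j' \<in> {1..a}"
    and eq: "next_block_copy i j = next_block_copy i' j'"
  have "level i = level i'"
    using next_block_copy_in_next_block(2)[OF i] next_block_copy_in_next_block(2)[OF i'] eq by simp
  moreover have "i \<le> boundary (Suc (level i))" "i' \<le> boundary (Suc (level i'))"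
    using i i' m_d_less_k by (intro level_bounds; auto)+
  ultimately show "i = i' \<and> j = j'"
    using eq i i' unfolding next_block_copy_def by (intro add_mult_eq_add_mult_cancel) auto
qed

text \<open>Each point of a block of level \<open>l \<noteq> par (mod 2)\<close> has \<open>a\<close> copies in the next block,
  which the merged vector joins to it; by step preservation the image takes the same value
  there, so these blocks carry at most a fraction \<open>1/a\<close> of its \<open>l\<^sub>p\<close>-mass.\<close>
lemma lp_norm_on_merged_image_le:
  assumes p: "p > 0" and F: "F ` pos_sphere_linf k \<subseteq> pos_sphere_lp p k"
    and step: "step_preserving k F" and par: "par < 2"
  shows "lp_norm_on p {i \<in> {1..m d}. level i mod 2 \<noteq> par} (F (level_vector (merge_level par)))
    \<le> (1 / a) powr (1 / p)"
proof -
  define x S where "x = level_vector (merge_level par)" and "S = {i \<in> {1..m d}. level i mod 2 \<noteq> par}"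
  have x: "x \<in> pos_sphere_linf k"
    unfolding x_def by (rule level_vector_mem_sphere) (simp add: merge_level_def)
  have "lp_norm_on p {1..k} (F x) = 1"
    using F x by (auto simp: pos_sphere_lp_def lp_norm_eq_lp_norm_on)
  then have unit: "(\<Sum>i\<in>{1..k}. \<bar>F x i\<bar> powr p) = 1"
    by (simp only: lp_norm_on_eq_1_iff[OF p])
  have same: "F x (next_block_copy i j) = F x i" if "i \<in> S" "j \<in> {1..a}" for i j
  proof -
    have i: "i \<in> {1..m d}" "level i mod 2 \<noteq> par" using that by (auto simp: S_def)
    moreover have "Suc (level i) mod 2 = par"
      using i(2) par by presburger
    ultimately have "merge_level par (Suc (level i)) = merge_level par (level i)"
      by (auto simp: merge_level_def)
    moreover have ik: "i \<in> {1..k}"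
      using i(1) m_d_less_k by auto
    ultimately have "x (next_block_copy i j) = x i"
      using next_block_copy_in_next_block[OF i(1) that(2)] unfolding x_def level_vector_def by simp
    then show ?thesis
      using step x next_block_copy_in_next_block(1)[OF i(1) that(2)] ik unfolding step_preserving_def by blast
  qed
  have "real (card {1..a}) * (\<Sum>i\<in>S. \<bar>F x i\<bar> powr p) \<le> (\<Sum>i\<in>{1..k}. \<bar>F x i\<bar> powr p)"
  proof (rule sum_le_sum_of_copies)
    show "inj_on (\<lambda>(i, j). next_block_copy i j) (S \<times> {1..a})"
      using inj_on_next_block_copy by (rule inj_on_subset) (auto simp: S_def)
    show "(\<lambda>(i, j). next_block_copy i j) ` (S \<times> {1..a}) \<subseteq> {1..k}"
      using next_block_copy_in_next_block(1) by (auto simp: S_def)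
  qed (auto simp: same)
  then have "(\<Sum>i\<in>S. \<bar>F x i\<bar> powr p) \<le> ((1 / a) powr (1 / p)) powr p"
    using unit a_ge_2 p by (simp add: powr_powr field_simps)
  then show ?thesis
    unfolding x_def[symmetric] S_def[symmetric] using p by (simp add: lp_norm_on_le_iff)
qed

lemma m_d_div_k_le: "real (m d) / real k \<le> 1 / real a"
proof -
  have "a * m d \<le> a\<^sup>2 * m d" using a_ge_2 by (simp add: power2_eq_square)
  then have "real a * real (m d) \<le> real k"
    using gap_last by (metis of_nat_le_iff of_nat_mult order_trans)
  then show ?thesis using a_ge_2 k_pos by (simp add: field_simps)
qed

lemma lp_norm_on_image_parity_le:
  assumes p: "p \<ge> 1" and F: "F ` pos_sphere_linf k \<subseteq> pos_sphere_lp p k"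
    and step: "step_preserving k F" and par: "par < 2"
  shows "lp_norm_on p {i \<in> {1..m d}. level i mod 2 \<noteq> par} (F (level_vector id))
    \<le> (1 / a) powr (1 / p) + modulus p k F (1 / real d)"
proof -
  define S u y where "S = {i \<in> {1..m d}. level i mod 2 \<noteq> par}" and "u = F (level_vector id)"
    and "y = F (level_vector (merge_level par))"
  have S: "S \<subseteq> {1..k}" using m_d_less_k by (auto simp: S_def)
  have "lp_norm_on p S u \<le> lp_norm_on p S y + lp_norm_on p S (\<lambda>i. u i - y i)"
    using lp_norm_on_triangle[of S p y "\<lambda>i. u i - y i"] p S by (simp add: finite_subset)
  also have "lp_norm_on p S y \<le> (1 / a) powr (1 / p)"
    unfolding S_def y_def using F step par by (intro lp_norm_on_merged_image_le) (use p in simp_all)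
  also have "lp_norm_on p S (\<lambda>i. u i - y i) \<le> lp_norm_on p {1..k} (\<lambda>i. u i - y i)"
    using S p by (intro lp_norm_on_mono) auto
  also have "\<dots> \<le> modulus p k F (1 / real d)"
  proof -
    have "level_vector id \<in> pos_sphere_linf k" "level_vector (merge_level par) \<in> pos_sphere_linf k"
      by (rule level_vector_mem_sphere; simp add: merge_level_def)+
    then show ?thesis
      unfolding u_def y_def lp_norm_eq_lp_norm_on[symmetric]
      using p F sup_norm_level_vector_merge_le by (intro lp_norm_diff_le_modulus)
  qed
  finally show ?thesis unfolding S_def u_def by simp
qed

lemma lp_norm_on_image_head_le:
  assumes "p \<ge> 1" "F ` pos_sphere_linf k \<subseteq> pos_sphere_lp p k" "step_preserving k F"
  shows "lp_norm_on p {1..m d} (F (level_vector id))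
    \<le> 2 * ((1 / a) powr (1 / p) + modulus p k F (1 / real d))"
proof -
  define S0 S1 where "S0 = {i \<in> {1..m d}. level i mod 2 \<noteq> 0}"
    and "S1 = {i \<in> {1..m d}. level i mod 2 \<noteq> 1}"
  have cover: "{1..m d} = S0 \<union> S1"
    unfolding S0_def S1_def by auto
  have "lp_norm_on p {1..m d} (F (level_vector id))
      \<le> lp_norm_on p S0 (F (level_vector id)) + lp_norm_on p S1 (F (level_vector id))"
    unfolding cover using assms(1) by (intro lp_norm_on_Un_le) (auto simp: S0_def S1_def)
  then show ?thesis
    using lp_norm_on_image_parity_le[OF assms, of 0] lp_norm_on_image_parity_le[OF assms, of 1]
    unfolding S0_def S1_def by simp
qed

theorem lp_norm_image_zvec_diff_flat_le:
  assumes p: "p \<ge> 1" and F: "F ` pos_sphere_linf k \<subseteq> pos_sphere_lp p k"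
    and step: "step_preserving k F"
  shows "lp_norm p k (\<lambda>i. F (zvec d m) i - 1 / real k powr (1 / p))
    \<le> 6 * (1 / a) powr (1 / p) + 4 * modulus p k F (1 / real d)"
proof -
  define u \<delta> \<omega> where "u = F (level_vector id)" and "\<delta> = (1 / a) powr (1 / p)"
    and "\<omega> = modulus p k F (1 / real d)"
  have z: "level_vector id \<in> pos_sphere_linf k"
    by (rule level_vector_mem_sphere) simp
  have flat: "u i = u k" if "i \<in> {m d<..k}" for i
  proof -
    have "level_vector id i = level_vector id k"
      using that level_tail[of i] level_tail[of k] m_d_less_k by (simp add: level_vector_def)
    then show ?thesis
      using step z that k_pos unfolding u_def step_preserving_def by auto
  qed
  have "u \<in> pos_sphere_lp p k" using F z unfolding u_def by auto
  then have u_nonneg: "\<And>i. i \<in> {1..k} \<Longrightarrow> 0 \<le> u i" and u_unit: "lp_norm_on p {1..k} u = 1"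
    by (auto simp: pos_sphere_lp_def lp_norm_eq_lp_norm_on)
  have ratio: "(real (m d) / real k) powr (1 / p) \<le> \<delta>"
    unfolding \<delta>_def using m_d_div_k_le p by (intro powr_mono2) auto
  have head: "lp_norm_on p {1..m d} u \<le> 2 * (\<delta> + \<omega>)"
    unfolding u_def \<delta>_def \<omega>_def using p F step by (rule lp_norm_on_image_head_le)
  have "lp_norm_on p {1..k} (\<lambda>i. u i - 1 / real k powr (1 / p))
      \<le> 2 * (lp_norm_on p {1..m d} u + (real (m d) / real k) powr (1 / p))"
    using lp_norm_on_diff_flat_le[OF p less_imp_le[OF m_d_less_k] _ u_nonneg u_unit flat] k_pos
    by simp
  also have "\<dots> \<le> 2 * (2 * (\<delta> + \<omega>) + \<delta>)"
    using head ratio by (intro mult_left_mono add_mono) auto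
  also have "\<dots> = 6 * \<delta> + 4 * \<omega>"
    by simp
  finally show ?thesis
    unfolding u_def zvec_eq_level_vector lp_norm_eq_lp_norm_on \<delta>_def \<omega>_def .
qed

end

lemma odd_powers_gap:
  fixes a :: nat
  assumes "2 \<le> a" and "x \<in> {a ^ (2 * j - 1) | j. j \<ge> 1}" "y \<in> {a ^ (2 * j - 1) | j. j \<ge> 1}"
    and "x < y"
  shows "a\<^sup>2 * x \<le> y"
proof -
  obtain i j where i: "x = a ^ (2 * i - 1)" "1 \<le> i" and j: "y = a ^ (2 * j - 1)" "1 \<le> j"
    using assms(2,3) by auto
  have "2 * i - 1 < 2 * j - 1"
    using assms(1,4) i j by (simp add: power_strict_increasing_iff)
  then have "2 + (2 * i - 1) \<le> 2 * j - 1"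
    using i(2) j(2) by arith
  then have "a ^ (2 + (2 * i - 1)) \<le> y"
    unfolding j using assms(1) by (intro power_increasing) auto
  then show ?thesis
    unfolding i by (simp add: power_add power2_eq_square mult.assoc)
qed

lemma lacunary_tuple_odd_powers:
  fixes a :: nat
  defines "Q \<equiv> {a ^ (2 * j - 1) | j. j \<ge> 1}"
  assumes a: "2 \<le> a" and "1 \<le> d" and m: "m \<in> incr_tuples Q d" and "k \<in> Q" "m d < k"
  shows "lacunary_tuple a d k m"
proof
  have gap: "a\<^sup>2 * x \<le> y" if "x \<in> Q" "y \<in> Q" "x < y" for x y
    using odd_powers_gap[OF a] that unfolding Q_def by blast
  have "m 1 \<in> Q"
    using m \<open>1 \<le> d\<close> by (auto simp: incr_tuples_def)
  then show "1 \<le> m 1"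
    using a unfolding Q_def by auto
  show "a\<^sup>2 * m l \<le> m (Suc l)" if "1 \<le> l" "l < d" for l
    using m that by (intro gap) (auto simp: incr_tuples_def)
  show "a\<^sup>2 * m d \<le> k"
    using assms by (intro gap) (auto simp: incr_tuples_def)
qed (use assms in auto)

lemma two_le_nat_ceiling_powr:
  fixes c r :: real
  assumes "2 \<le> c" "1 \<le> r"
  shows "2 \<le> nat \<lceil>c powr r\<rceil>"
proof -
  have "c \<le> c powr r"
    using powr_mono[of 1 r c] assms by simp
  then show ?thesis
    using assms by linarith
qed

lemma powr_inverse_ceiling_powr_le:
  fixes c r :: real
  assumes "0 < c" "0 < r"
  shows "(1 / real (nat \<lceil>c powr r\<rceil>)) powr (1 / r) \<le> 1 / c"
proof -
  have "c powr r \<le> real (nat \<lceil>c powr r\<rceil>)"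
    by auto
  then have "1 / real (nat \<lceil>c powr r\<rceil>) \<le> 1 / c powr r"
    using assms(1) by (intro divide_left_mono) auto
  then have "(1 / real (nat \<lceil>c powr r\<rceil>)) powr (1 / r) \<le> (1 / c powr r) powr (1 / r)"
    using assms by (intro powr_mono2 divide_nonneg_nonneg of_nat_0_le_iff) auto
  also have "\<dots> = 1 / c"
    using assms by (simp add: powr_divide powr_powr)
  finally show ?thesis .
qed

theorem theorem6p2:
  fixes r \<epsilon> :: real and d :: nat
  assumes "1 \<le> r" and "d \<ge> 1" and "\<epsilon> > 0"
  defines "a \<equiv> nat \<lceil>(32 / \<epsilon> + 2) powr r\<rceil>"
  defines "Q \<equiv> {a ^ (2 * j - 1) | j. j \<ge> 1}"
  shows "\<forall>m\<in>incr_tuples Q d. \<forall>k\<in>Q. k > m d \<longrightarrow>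
           (\<forall>F. F ` pos_sphere_linf k \<subseteq> pos_sphere_lp r k \<longrightarrow> step_preserving k F \<longrightarrow>
              modulus r k F (1 / real d) \<le> \<epsilon> / 8 \<longrightarrow>
              lp_norm r k (\<lambda>i. F (zvec d m) i - 1 / real k powr (1 / r)) \<le> \<epsilon>)"
proof (intro ballI impI allI)
  fix m k F
  assume m: "m \<in> incr_tuples Q d" and k: "k \<in> Q" "m d < k"
    and F: "F ` pos_sphere_linf k \<subseteq> pos_sphere_lp r k" and step: "step_preserving k F"
    and modulus: "modulus r k F (1 / real d) \<le> \<epsilon> / 8"
  have a: "2 \<le> a"
    unfolding a_def using assms by (intro two_le_nat_ceiling_powr) auto
  interpret lacunary_tuple a d k m
    using lacunary_tuple_odd_powers[OF a] assms m k unfolding Q_def by blast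
  have "0 < 32 / \<epsilon> + 2"
    using assms by (intro add_pos_pos divide_pos_pos) auto
  then have "(1 / a) powr (1 / r) \<le> 1 / (32 / \<epsilon> + 2)"
    unfolding a_def by (rule powr_inverse_ceiling_powr_le) (use assms in simp)
  also have "\<dots> \<le> \<epsilon> / 32"
    using assms by (simp add: field_simps)
  finally have "(1 / a) powr (1 / r) \<le> \<epsilon> / 32" .
  moreover have "lp_norm r k (\<lambda>i. F (zvec d m) i - 1 / real k powr (1 / r))
      \<le> 6 * (1 / a) powr (1 / r) + 4 * modulus r k F (1 / real d)"
    using assms(1) F step by (rule lp_norm_image_zvec_diff_flat_le)
  ultimately show "lp_norm r k (\<lambda>i. F (zvec d m) i - 1 / real k powr (1 / r)) \<le> \<epsilon>"
    using modulus assms by linarith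
qed

end
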